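(* In the setting described in the context, for every $j\in[\varepsilon^{-1}-\varepsilon^{-1/2}]$ it holds that $$\mathbb{E}\left[v(S_{j-1}\setminus S_j)\,\middle|\,\mathcal{F}_{j-1}\right]\ \ge\ v(x^j)\cdot\left(\varepsilon-\varepsilon^{3/2}\right)\cdot\frac{1}{1-(j-1)\varepsilon}.$$
   Context: A CMK instance is $\mathcal{I}=(I,w,v,m,k)$ with $I$ a finite item set, $w:I\to[0,1]$, $v:I\to\mathbb{R}_{\ge0}$, $m,k\in\mathbb{N}_{>0}$. A configuration is $C\subseteq I$ with $|C|\le k$ and $\sum_{i\in C}w(i)\le1$; $\mathcal{C}$ is the set of configurations and $\mathcal{C}(i)=\{C\in\mathcal{C}:i\in C\}$. A solution is a tuple of $m$ configurations, with value $v$ of their union; $\mathrm{OPT}(\mathcal{I})$ is the maximum value. A fractional solution is $x\in\mathbb{R}_{\ge0}^{\mathcal{C}}$, with $\mathrm{cover}_i(x)=\sum_{C\in\mathcal{C}(i)}x_C$, $\|x\|=\sum_Cx_C$; it is feasible if $\mathrm{cover}(x)\in[0,1]^I$; for $y\in\mathbb{R}^I$, $v(y)=\sum_iy_iv(i)$, and $v(x)=v(\mathrm{cover}(x))$. For $S\subseteq I$ and $\ell\in\mathbb{N}$, $\mathrm{LP}(S,\ell)$ is: maximize $v(x)$ over feasible fractional solutions $x$ with $x_C=0$ whenever $C\not\subseteq S$, and $\|x\|=\ell$. For $\|x\|\ne0$, a random configuration $R$ is distributed by $x$ ($R\sim x$) if $\Pr(R=C)=x_C/\|x\|$. Given $\varepsilon\in(0,0.1)$,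 $\mathcal{I}$ is $\varepsilon$-simple if $m>\exp(\exp(\varepsilon^{-30}))$ and $\varepsilon m\in\mathbb{N}$. Iterative randomized rounding: let $\varepsilon\in(0,0.1)$ with $\varepsilon^{-1/2}\in\mathbb{N}$ and $\mathcal{I}$ be $\varepsilon$-simple; let $q=\varepsilon m$ and $S_0=I$. For $j=1,\dots,\varepsilon^{-1}$: let $m_j=m(1-(j-1)\varepsilon)$; let $x^j$ be a $(1-\varepsilon)$-approximate solution of $\mathrm{LP}(S_{j-1},m_j)$ (a feasible solution of value at least $(1-\varepsilon)$ times its optimum), determined by the outcomes of the samples of previous iterations; sample independently $R^j_1,\dots,R^j_q\sim x^j$; set $S_j=S_{j-1}\setminus\bigcup_{b=1}^qR^j_b$. The output value is $V=v(I\setminus S_{\varepsilon^{-1}})$. Let $y^j=\mathrm{cover}(x^j)$. Let $\mathcal{F}_0$ be the trivial $\sigma$-algebra and $\mathcal{F}_j$ the $\sigma$-algebra generated by $\{R^{j'}_b: j'\le j,\ b\in[q]\}$. For $T\subseteq I$, $v(T)=\sum_{i\in T}v(i)$. *)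

theory Defs
  imports "HOL-Probability.Probability"
begin

definition configs :: "'a set \<Rightarrow> ('a \<Rightarrow> real) \<Rightarrow> nat \<Rightarrow> 'a set set" where
  "configs I w k = {C. C \<subseteq> I \<and> card C \<le> k \<and> (\<Sum>i\<in>C. w i) \<le> 1}"

definition cover :: "'a set \<Rightarrow> ('a \<Rightarrow> real) \<Rightarrow> nat \<Rightarrow> ('a set \<Rightarrow> real) \<Rightarrow> 'a \<Rightarrow> real" where
  "cover I w k x i = (\<Sum>C\<in>{C\<in>configs I w k. i \<in> C}. x C)"

definition frac_norm :: "'a set \<Rightarrow> ('a \<Rightarrow> real) \<Rightarrow> nat \<Rightarrow> ('a set \<Rightarrow> real) \<Rightarrow> real" where
  "frac_norm I w k x = (\<Sum>C\<in>configs I w k. x C)"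

definition frac_feasible :: "'a set \<Rightarrow> ('a \<Rightarrow> real) \<Rightarrow> nat \<Rightarrow> ('a set \<Rightarrow> real) \<Rightarrow> bool" where
  "frac_feasible I w k x \<longleftrightarrow>
     (\<forall>C. 0 \<le> x C) \<and> (\<forall>C. C \<notin> configs I w k \<longrightarrow> x C = 0) \<and>
     (\<forall>i\<in>I. cover I w k x i \<le> 1)"

definition frac_val :: "'a set \<Rightarrow> ('a \<Rightarrow> real) \<Rightarrow> ('a \<Rightarrow> real) \<Rightarrow> nat \<Rightarrow> ('a set \<Rightarrow> real) \<Rightarrow> real" where
  "frac_val I w v k x = (\<Sum>i\<in>I. cover I w k x i * v i)"

definition LP_feasible :: "'a set \<Rightarrow> ('a \<Rightarrow> real) \<Rightarrow> nat \<Rightarrow> 'a set \<Rightarrow> real \<Rightarrow> ('a set \<Rightarrow> real) \<Rightarrow> bool" where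
  "LP_feasible I w k S l x \<longleftrightarrow>
     frac_feasible I w k x \<and> (\<forall>C. \<not> C \<subseteq> S \<longrightarrow> x C = 0) \<and> frac_norm I w k x = l"

definition LP_opt :: "'a set \<Rightarrow> ('a \<Rightarrow> real) \<Rightarrow> ('a \<Rightarrow> real) \<Rightarrow> nat \<Rightarrow> 'a set \<Rightarrow> real \<Rightarrow> real" where
  "LP_opt I w v k S l = (SUP x\<in>{x. LP_feasible I w k S l x}. frac_val I w v k x)"

definition LP_approx :: "real \<Rightarrow> 'a set \<Rightarrow> ('a \<Rightarrow> real) \<Rightarrow> ('a \<Rightarrow> real) \<Rightarrow> nat \<Rightarrow> 'a set \<Rightarrow> real
    \<Rightarrow> ('a set \<Rightarrow> real) \<Rightarrow> bool" where
  "LP_approx eps I w v k S l x \<longleftrightarrow>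
     LP_feasible I w k S l x \<and> frac_val I w v k x \<ge> (1 - eps) * LP_opt I w v k S l"

definition sample_pmf :: "'a set \<Rightarrow> ('a \<Rightarrow> real) \<Rightarrow> nat \<Rightarrow> ('a set \<Rightarrow> real) \<Rightarrow> 'a set pmf" where
  "sample_pmf I w k x = embed_pmf (\<lambda>C. x C / frac_norm I w k x)"

text \<open>Remaining item set after a history of sampling rounds (each round a list of q
  sampled configurations): S = I minus the union of all sampled configurations.\<close>
definition remaining :: "'a set \<Rightarrow> 'a set list list \<Rightarrow> 'a set" where
  "remaining I h = I - (\<Union>r\<in>set h. \<Union>(set r))"

text \<open>The policy P j h gives the fractional solution x^j chosen in round j after history h
  (so x^j is determined by the outcomes of the previous samples); round j draws q
  independent samples from x^j.\<close>
primrec rr_hist :: "'a set \<Rightarrow> ('a \<Rightarrow> real) \<Rightarrow> nat \<Rightarrow> nat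
    \<Rightarrow> (nat \<Rightarrow> 'a set list list \<Rightarrow> 'a set \<Rightarrow> real) \<Rightarrow> nat \<Rightarrow> 'a set list list pmf" where
  "rr_hist I w k q P 0 = return_pmf []"
| "rr_hist I w k q P (Suc j) =
     bind_pmf (rr_hist I w k q P j)
       (\<lambda>h. map_pmf (\<lambda>r. h @ [r]) (replicate_pmf q (sample_pmf I w k (P (Suc j) h))))"

definition setval :: "('a \<Rightarrow> real) \<Rightarrow> 'a set \<Rightarrow> real" where
  "setval v T = (\<Sum>i\<in>T. v i)"

end

theory Submission
  imports Defs
begin

text \<open>Conditioned on the first \<open>j - 1\<close> rounds, round \<open>j\<close> draws \<open>q = \<epsilon> m\<close> independent
  configurations from \<open>x\<^sup>j\<close>, whose norm is \<open>m c\<close> with \<open>c = 1 - (j - 1) \<epsilon> \<ge> \<surd>\<epsilon>\<close> in the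
  stated range of \<open>j\<close>. An item \<open>i \<in> S\<^sub>j\<^sub>-\<^sub>1\<close> of cover \<open>y\<^sub>i\<close> is missed by every sample with
  probability \<open>(1 - y\<^sub>i / (m c))\<^sup>q\<close>, and \<open>1 - (1 - p)\<^sup>q \<ge> q p (1 - q p / 2)\<close> with
  \<open>q p = \<epsilon> y\<^sub>i / c \<le> \<surd>\<epsilon>\<close> shows that it is hit with probability at least
  \<open>y\<^sub>i (\<epsilon> - \<epsilon>\<^sup>3\<^sup>/\<^sup>2) / c\<close>. Summing against \<open>v\<close> over \<open>S\<^sub>j\<^sub>-\<^sub>1\<close>, which supports \<open>x\<^sup>j\<close>, gives the bound.\<close>

lemma cond_pmf_bind_pmf_fibre:
  assumes h: "h \<in> set_pmf p"
    and G: "\<And>x y. x \<in> set_pmf p \<Longrightarrow> y \<in> set_pmf (K x) \<Longrightarrow> G y = x"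
  shows "cond_pmf (bind_pmf p K) {y. G y = h} = K h"
proof -
  have "map_pmf G (bind_pmf p K) = bind_pmf p return_pmf"
    unfolding map_bind_pmf
  proof (rule bind_pmf_cong)
    fix x assume "x \<in> set_pmf p"
    then have "map_pmf G (K x) = map_pmf (\<lambda>_. x) (K x)"
      by (intro map_pmf_cong) (auto dest: G)
    then show "map_pmf G (K x) = return_pmf x" by simp
  qed simp
  then have "measure_pmf.prob (bind_pmf p K) (G -` {h}) = pmf p h"
    by (simp only: measure_map_pmf[symmetric] bind_return_pmf' measure_pmf_single)
  moreover have "G -` {h} = {y. G y = h}"
    by auto
  ultimately have marginal: "measure_pmf.prob (bind_pmf p K) {y. G y = h} = pmf p h"
    by simp
  have ne: "set_pmf (bind_pmf p K) \<inter> {y. G y = h} \<noteq> {}"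
    using h G set_pmf_not_empty[of "K h"] by fastforce
  show ?thesis
  proof (rule pmf_eqI)
    fix y
    show "pmf (cond_pmf (bind_pmf p K) {y. G y = h}) y = pmf (K h) y"
    proof (cases "G y = h")
      case True
      have "pmf (bind_pmf p K) y = pmf p h * pmf (K h) y"
        unfolding pmf_bind
        by (subst integral_measure_pmf[of "{h}"]) (auto simp: True set_pmf_iff[symmetric] dest: G)
      then show ?thesis
        using True h by (simp add: pmf_cond[OF ne] marginal set_pmf_iff)
    next
      case False
      then have "y \<notin> set_pmf (K h)" using G[OF h] by blast
      then show ?thesis using False by (simp add: pmf_cond[OF ne] set_pmf_iff)
    qed
  qed
qed

lemma prob_replicate_pmf_all:
  "measure_pmf.prob (replicate_pmf n D) {r. \<forall>x\<in>set r. x \<in> B} = measure_pmf.prob D B ^ n"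
proof -
  have "emeasure (replicate_pmf n D) {r. \<forall>x\<in>set r. x \<in> B} = ennreal (measure_pmf.prob D B ^ n)"
  proof (induction n)
    case 0
    then show ?case by simp
  next
    case (Suc n)
    have "emeasure (replicate_pmf (Suc n) D) {r. \<forall>x\<in>set r. x \<in> B}
        = (\<integral>\<^sup>+x. emeasure (replicate_pmf n D) {r. x \<in> B \<and> (\<forall>y\<in>set r. y \<in> B)} \<partial>D)"
      by (simp add: map_pmf_def[symmetric] vimage_def)
    also have "\<dots> = (\<integral>\<^sup>+x. ennreal (measure_pmf.prob D B ^ n) * indicator B x \<partial>D)"
      using Suc by (intro nn_integral_cong) (auto split: split_indicator)
    also have "\<dots> = ennreal (measure_pmf.prob D B ^ n * measure_pmf.prob D B)"
      by (simp add: nn_integral_cmult measure_pmf.emeasure_eq_measure ennreal_mult')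
    finally show ?case by (simp add: mult.commute)
  qed
  then show ?thesis by (simp add: measure_def)
qed

lemma prob_replicate_pmf_some:
  "measure_pmf.prob (replicate_pmf n D) {r. \<exists>x\<in>set r. x \<in> B} = 1 - measure_pmf.prob D (- B) ^ n"
proof -
  have "{r. \<exists>x\<in>set r. x \<in> B} = UNIV - {r. \<forall>x\<in>set r. x \<in> - B}"
    by auto
  then show ?thesis
    using measure_pmf.prob_compl[of "{r. \<forall>x\<in>set r. x \<in> - B}" "replicate_pmf n D"]
      prob_replicate_pmf_all[of n D "- B"]
    by simp
qed

lemma one_minus_power_le_quadratic:
  fixes p :: real
  assumes "0 \<le> p" "p \<le> 1"
  shows "(1 - p) ^ n \<le> 1 - real n * p + (real n * p)\<^sup>2 / 2"
proof (induction n)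
  case 0
  then show ?case by simp
next
  case (Suc n)
  have "(1 - p) ^ Suc n = (1 - p) ^ n * (1 - p)"
    by simp
  also have "\<dots> \<le> (1 - real n * p + (real n * p)\<^sup>2 / 2) * (1 - p)"
    using Suc assms by (intro mult_right_mono) auto
  also have "\<dots> \<le> 1 - real (Suc n) * p + (real (Suc n) * p)\<^sup>2 / 2"
    using assms by (simp add: algebra_simps power2_eq_square)
  finally show ?case .
qed

lemma length_rr_hist: "H \<in> set_pmf (rr_hist I w k q P n) \<Longrightarrow> length H = n"
  by (induction n arbitrary: H) auto

lemma map_pmf_take_rr_hist:
  assumes "j \<le> n"
  shows "map_pmf (take j) (rr_hist I w k q P n) = rr_hist I w k q P j"
proof -
  have "map_pmf (take j) (rr_hist I w k q P (j + d)) = rr_hist I w k q P j" for d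
  proof (induction d)
    case 0
    have "map_pmf (take j) (rr_hist I w k q P j) = map_pmf id (rr_hist I w k q P j)"
      by (rule map_pmf_cong) (auto dest: length_rr_hist)
    then show ?case by simp
  next
    case (Suc d)
    have "map_pmf (take j) (rr_hist I w k q P (j + Suc d))
        = bind_pmf (rr_hist I w k q P (j + d)) (\<lambda>h. return_pmf (take j h))"
      unfolding add_Suc_right rr_hist.simps map_bind_pmf pmf.map_comp
      by (rule bind_pmf_cong) (auto simp: o_def dest!: length_rr_hist)
    then show ?case using Suc by (simp add: map_pmf_def)
  qed
  then show ?thesis using assms by (metis le_add_diff_inverse)
qed

lemma expectation_cond_rr_hist_next_round:
  fixes f :: "'a set list list \<Rightarrow> real"
  assumes "Suc j \<le> n" and h: "h \<in> set_pmf (rr_hist I w k q P j)"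
  shows "measure_pmf.expectation (cond_pmf (rr_hist I w k q P n) {H. take j H = h})
           (\<lambda>H. f (take (Suc j) H))
       = measure_pmf.expectation (replicate_pmf q (sample_pmf I w k (P (Suc j) h)))
           (\<lambda>r. f (h @ [r]))"
proof -
  define A where "A = {G :: 'a set list list. take j G = h}"
  have A_pre: "{H. take j H = h} = take (Suc j) -` A"
    unfolding A_def by auto
  have "h \<in> take j ` set_pmf (rr_hist I w k q P n)"
    using h unfolding map_pmf_take_rr_hist[OF Suc_leD[OF assms(1)], symmetric] by simp
  then have ne: "set_pmf (rr_hist I w k q P n) \<inter> take (Suc j) -` A \<noteq> {}"
    unfolding A_pre[symmetric] by auto
  have fibre: "cond_pmf (rr_hist I w k q P (Suc j)) A
      = map_pmf (\<lambda>r. h @ [r]) (replicate_pmf q (sample_pmf I w k (P (Suc j) h)))"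
    unfolding A_def rr_hist.simps
    by (rule cond_pmf_bind_pmf_fibre[OF h]) (auto dest: length_rr_hist)
  have "measure_pmf.expectation (cond_pmf (rr_hist I w k q P n) {H. take j H = h})
          (\<lambda>H. f (take (Suc j) H))
      = measure_pmf.expectation
          (map_pmf (take (Suc j)) (cond_pmf (rr_hist I w k q P n) (take (Suc j) -` A))) f"
    unfolding A_pre integral_map_pmf ..
  also have "\<dots> = measure_pmf.expectation
      (map_pmf (\<lambda>r. h @ [r]) (replicate_pmf q (sample_pmf I w k (P (Suc j) h)))) f"
    unfolding cond_map_pmf[OF ne, symmetric] map_pmf_take_rr_hist[OF assms(1)] fibre ..
  finally show ?thesis
    unfolding integral_map_pmf .
qed

lemma remaining_diff_append:
  "remaining I h - remaining I (h @ [r]) = remaining I h \<inter> \<Union>(set r)"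
  by (auto simp: remaining_def)

lemma finite_configs: "finite I \<Longrightarrow> finite (configs I w k)"
  unfolding configs_def by (rule finite_subset[of _ "Pow I"]) auto

lemma pmf_sample_pmf:
  assumes "finite I" and feas: "frac_feasible I w k x" and pos: "frac_norm I w k x > 0"
  shows "pmf (sample_pmf I w k x) C = x C / frac_norm I w k x"
  unfolding sample_pmf_def
proof (rule pmf_embed_pmf)
  have out: "\<And>C. C \<notin> configs I w k \<Longrightarrow> x C = 0" and nonneg: "\<And>C. 0 \<le> x C"
    using feas unfolding frac_feasible_def by auto
  then show "0 \<le> x C / frac_norm I w k x" for C
    using pos by simp
  have "(\<integral>\<^sup>+C. ennreal (x C / frac_norm I w k x) \<partial>count_space UNIV)
      = ennreal (\<Sum>C\<in>configs I w k. x C / frac_norm I w k x)"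
    using finite_configs[OF assms(1)] out nonneg pos
    by (subst nn_integral_count_space') (auto intro!: sum_ennreal)
  also have "(\<Sum>C\<in>configs I w k. x C / frac_norm I w k x) = 1"
    using pos by (simp add: sum_divide_distrib[symmetric] frac_norm_def)
  finally show "(\<integral>\<^sup>+C. ennreal (x C / frac_norm I w k x) \<partial>count_space UNIV) = 1"
    by simp
qed

lemma prob_sample_pmf_contains:
  assumes "finite I" and feas: "frac_feasible I w k x" and pos: "frac_norm I w k x > 0"
  shows "measure_pmf.prob (sample_pmf I w k x) {C. i \<in> C} = cover I w k x i / frac_norm I w k x"
proof -
  let ?D = "sample_pmf I w k x"
  have "set_pmf ?D \<subseteq> configs I w k"
    using feas pmf_sample_pmf[OF assms] unfolding frac_feasible_def by (auto simp: set_pmf_iff)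
  then have "{C. i \<in> C} \<inter> set_pmf ?D = {C\<in>configs I w k. i \<in> C} \<inter> set_pmf ?D"
    by auto
  then have "measure_pmf.prob ?D {C. i \<in> C} = measure_pmf.prob ?D {C\<in>configs I w k. i \<in> C}"
    by (metis measure_Int_set_pmf)
  also have "\<dots> = (\<Sum>C\<in>{C\<in>configs I w k. i \<in> C}. x C / frac_norm I w k x)"
    using finite_configs[OF assms(1)] by (simp add: measure_measure_pmf_finite pmf_sample_pmf[OF assms])
  finally show ?thesis
    by (simp add: cover_def sum_divide_distrib[symmetric])
qed

lemma expectation_replicate_pmf_covered_value:
  assumes "finite S"
  shows "measure_pmf.expectation (replicate_pmf n D) (\<lambda>r. setval v (S \<inter> \<Union>(set r)))
       = (\<Sum>i\<in>S. v i * (1 - measure_pmf.prob D {C. i \<notin> C} ^ n))"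
proof -
  have "setval v (S \<inter> \<Union>(set r)) = (\<Sum>i\<in>S. v i * indicator {r. \<exists>C\<in>set r. C \<in> {C. i \<in> C}} r)" for r
    unfolding setval_def using assms
    by (simp add: sum.inter_filter indicator_def of_bool_def if_distrib Int_def cong: if_cong)
  moreover have "measure_pmf.prob (replicate_pmf n D) {r. \<exists>C\<in>set r. i \<in> C}
      = 1 - measure_pmf.prob D {C. i \<notin> C} ^ n" for i
    using prob_replicate_pmf_some[of n D "{C. i \<in> C}"] by (simp add: Compl_eq)
  ultimately show ?thesis
    by (simp add: measure_pmf.emeasure_eq_measure)
qed

text \<open>With \<open>t = n y / (M c) = \<epsilon> y / c \<le> \<surd>\<epsilon>\<close>, the bound \<open>1 - (1 - t/n)\<^sup>n \<ge> t (1 - t/2)\<close>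
  loses at most a factor \<open>1 - \<surd>\<epsilon>\<close>.\<close>
lemma hit_probability_lower_bound:
  fixes y eps c M :: real and n :: nat
  assumes y: "0 \<le> y" "y \<le> 1" and eps: "0 < eps" "eps < 1"
    and c: "sqrt eps \<le> c" and M: "0 < M" and n: "real n = eps * M"
  shows "y * (eps - eps powr (3/2)) / c \<le> 1 - (1 - y / (M * c)) ^ n"
proof -
  have c_pos: "0 < c" using c eps by (smt (verit) real_sqrt_gt_zero)
  define p where "p = y / (M * c)"
  define t where "t = eps * y / c"
  have np: "real n * p = t"
    unfolding p_def t_def n using M c_pos by (simp add: field_simps)
  have t_nonneg: "0 \<le> t"
    unfolding t_def using eps y c_pos by simp
  have "t \<le> eps / c"
    unfolding t_def using y eps c_pos by (simp add: divide_right_mono mult_left_le)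
  also have "\<dots> \<le> eps / sqrt eps"
    using c eps by (simp add: frac_le)
  also have "\<dots> = sqrt eps"
    using eps by (simp add: real_div_sqrt)
  finally have t_le: "t \<le> sqrt eps" .
  have p_nonneg: "0 \<le> p"
    unfolding p_def using y M c_pos by simp
  have "1 \<le> n"
    using n eps M by (metis of_nat_0 linorder_not_le less_one mult_pos_pos order_less_irrefl)
  then have "p \<le> t"
    using np p_nonneg by (simp flip: np add: mult_le_cancel_right1)
  moreover have "sqrt eps < 1" using eps by simp
  ultimately have p_le: "p \<le> 1" using t_le by linarith
  have "t * (1 - sqrt eps) \<le> t * (1 - t / 2)"
    using t_nonneg t_le eps by (intro mult_left_mono) auto
  also have "\<dots> \<le> 1 - (1 - p) ^ n"
    using one_minus_power_le_quadratic[OF p_nonneg p_le, of n]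
    unfolding np by (simp add: power2_eq_square algebra_simps)
  finally have "t * (1 - sqrt eps) \<le> 1 - (1 - p) ^ n" .
  moreover have "eps powr (3/2) = eps * sqrt eps"
    using eps by (simp add: powr_add[of eps 1 "1/2", simplified] powr_half_sqrt)
  ultimately show ?thesis
    unfolding p_def t_def using c_pos by (simp add: field_simps)
qed

lemma frac_val_eq_sum_support:
  assumes "finite I" and "S \<subseteq> I" and supp: "\<And>C. \<not> C \<subseteq> S \<Longrightarrow> x C = 0"
  shows "frac_val I w v k x = (\<Sum>i\<in>S. cover I w k x i * v i)"
proof -
  have "cover I w k x i = 0" if "i \<in> I - S" for i
    unfolding cover_def using that by (intro sum.neutral) (auto intro!: supp)
  then show ?thesis
    unfolding frac_val_def using assms(1,2) by (intro sum.mono_neutral_right) auto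
qed

lemma frac_val_le_expected_covered_value:
  assumes finI: "finite I" and v_nonneg: "\<forall>i\<in>I. 0 \<le> v i"
    and feas: "frac_feasible I w k x" and supp: "\<And>C. \<not> C \<subseteq> S \<Longrightarrow> x C = 0" and SI: "S \<subseteq> I"
    and norm: "frac_norm I w k x = M * c" and M: "0 < M" and c: "sqrt eps \<le> c"
    and eps: "0 < eps" "eps < 1" and q: "real q = eps * M"
  shows "frac_val I w v k x * (eps - eps powr (3/2)) * (1 / c)
       \<le> measure_pmf.expectation (replicate_pmf q (sample_pmf I w k x))
           (\<lambda>r. setval v (S \<inter> \<Union>(set r)))"
proof -
  have c_pos: "0 < c" using c eps by (smt (verit) real_sqrt_gt_zero)
  have pos: "frac_norm I w k x > 0" using norm M c_pos by simp
  have miss: "measure_pmf.prob (sample_pmf I w k x) {C. i \<notin> C} = 1 - cover I w k x i / (M * c)" for i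
  proof -
    have "{C. i \<notin> C} = UNIV - {C. i \<in> C}" by auto
    then show ?thesis
      using prob_sample_pmf_contains[OF finI feas pos, of i] norm
        measure_pmf.prob_compl[of "{C. i \<in> C}" "sample_pmf I w k x"]
      by simp
  qed
  have cover_range: "0 \<le> cover I w k x i \<and> cover I w k x i \<le> 1" if "i \<in> I" for i
    using feas that unfolding frac_feasible_def cover_def by (auto intro: sum_nonneg)
  have "frac_val I w v k x * (eps - eps powr (3/2)) * (1 / c)
      = (\<Sum>i\<in>S. cover I w k x i * v i) * (eps - eps powr (3/2)) / c"
    using frac_val_eq_sum_support[OF finI SI supp] by simp
  also have "\<dots> = (\<Sum>i\<in>S. v i * (cover I w k x i * (eps - eps powr (3/2)) / c))"
    unfolding sum_distrib_right sum_divide_distrib by (simp add: mult_ac)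
  also have "\<dots> \<le> (\<Sum>i\<in>S. v i * (1 - (1 - cover I w k x i / (M * c)) ^ q))"
    using SI v_nonneg cover_range
    by (intro sum_mono mult_left_mono hit_probability_lower_bound[OF _ _ eps c M q]) auto
  also have "\<dots> = measure_pmf.expectation (replicate_pmf q (sample_pmf I w k x))
           (\<lambda>r. setval v (S \<inter> \<Union>(set r)))"
    using finI SI by (simp add: expectation_replicate_pmf_covered_value finite_subset miss)
  finally show ?thesis .
qed

lemma sqrt_le_remaining_share:
  fixes eps :: real and j :: nat
  assumes eps: "0 < eps" and j: "real j \<le> 1 / eps - eps powr (-1/2)"
  shows "sqrt eps \<le> 1 - (real j - 1) * eps"
proof -
  have "eps powr (-1/2) * eps = eps powr (-1/2) * eps powr 1"
    using eps by simp
  also have "\<dots> = eps powr (-1/2 + 1)"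
    by (rule powr_add[symmetric])
  also have "\<dots> = sqrt eps"
    using eps by (simp add: powr_half_sqrt)
  finally have "eps powr (-1/2) * eps = sqrt eps" .
  then have "(1 / eps - eps powr (-1/2) - 1) * eps = 1 - sqrt eps - eps"
    using eps by (simp add: left_diff_distrib)
  moreover have "(real j - 1) * eps \<le> (1 / eps - eps powr (-1/2) - 1) * eps"
    using j eps by (intro mult_right_mono) auto
  ultimately show ?thesis
    using eps by linarith
qed

lemma frac_val_le_cond_expected_round_gain:
  assumes finI: "finite I" and v_nonneg: "\<forall>i\<in>I. 0 \<le> v i" and m: "0 < m"
    and eps: "0 < eps" "eps < 1" and q: "real q = eps * real m"
    and c: "sqrt eps \<le> 1 - real i * eps" and N: "Suc i \<le> N"
    and h: "h \<in> set_pmf (rr_hist I w k q P i)"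
    and feas: "LP_feasible I w k (remaining I h) (real m * (1 - real i * eps)) (P (Suc i) h)"
  shows "frac_val I w v k (P (Suc i) h) * (eps - eps powr (3/2)) * (1 / (1 - real i * eps))
       \<le> measure_pmf.expectation (cond_pmf (rr_hist I w k q P N) {H. take i H = h})
           (\<lambda>H. setval v (remaining I (take i H) - remaining I (take (Suc i) H)))"
proof -
  have "frac_val I w v k (P (Suc i) h) * (eps - eps powr (3/2)) * (1 / (1 - real i * eps))
      \<le> measure_pmf.expectation (replicate_pmf q (sample_pmf I w k (P (Suc i) h)))
          (\<lambda>r. setval v (remaining I h \<inter> \<Union>(set r)))"
    using feas finI v_nonneg m eps c q
    by (intro frac_val_le_expected_covered_value) (auto simp: LP_feasible_def remaining_def)
  also have "\<dots> = measure_pmf.expectation (cond_pmf (rr_hist I w k q P N) {H. take i H = h})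
      (\<lambda>H. setval v (remaining I (take i H) - remaining I (take (Suc i) H)))"
    using expectation_cond_rr_hist_next_round[OF N h,
        of "\<lambda>G. setval v (remaining I (take i G) - remaining I G)"] length_rr_hist[OF h]
    by (simp add: min_def remaining_diff_append)
  finally show ?thesis .
qed

theorem lemma4p3:
  fixes I :: "'a set" and w v :: "'a \<Rightarrow> real" and m k :: nat and eps :: real
    and P :: "nat \<Rightarrow> 'a set list list \<Rightarrow> 'a set \<Rightarrow> real"
  assumes finI: "finite I"
    and w_range: "\<forall>i\<in>I. 0 \<le> w i \<and> w i \<le> 1"
    and v_nonneg: "\<forall>i\<in>I. 0 \<le> v i"
    and m_pos: "0 < m" and k_pos: "0 < k"
    and eps_range: "0 < eps" "eps < 0.1"
    and eps_sqrt_nat: "eps powr (-1/2) \<in> \<nat>"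
    and simple_m: "real m > exp (exp (eps powr (-30)))"
    and simple_nat: "eps * real m \<in> \<nat>"
    and policy: "\<forall>j\<in>{1..nat \<lfloor>1/eps\<rfloor>}.
        \<forall>h\<in>set_pmf (map_pmf (take (j - 1))
                (rr_hist I w k (nat \<lfloor>eps * real m\<rfloor>) P (nat \<lfloor>1/eps\<rfloor>))).
          LP_approx eps I w v k (remaining I h) (real m * (1 - (real j - 1) * eps)) (P j h)"
  shows "\<forall>j\<in>{1..nat \<lfloor>1/eps - eps powr (-1/2)\<rfloor>}.
     \<forall>h\<in>set_pmf (map_pmf (take (j - 1))
             (rr_hist I w k (nat \<lfloor>eps * real m\<rfloor>) P (nat \<lfloor>1/eps\<rfloor>))).
       measure_pmf.expectation
           (cond_pmf (rr_hist I w k (nat \<lfloor>eps * real m\<rfloor>) P (nat \<lfloor>1/eps\<rfloor>))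
                     {H. take (j - 1) H = h})
           (\<lambda>H. setval v (remaining I (take (j - 1) H) - remaining I (take j H)))
       \<ge> frac_val I w v k (P j h) * (eps - eps powr (3/2)) * (1 / (1 - (real j - 1) * eps))"
proof (intro ballI, goal_cases)
  case (1 j h)
  define q where "q = nat \<lfloor>eps * real m\<rfloor>"
  define N where "N = nat \<lfloor>1/eps\<rfloor>"
  have q: "real q = eps * real m"
    using simple_nat unfolding q_def by (auto elim: Nats_cases)
  have j_le: "real j \<le> 1/eps - eps powr (-1/2)"
    using 1(1) by simp linarith
  then have "j \<le> N"
    unfolding N_def using eps_range by (intro le_nat_floor) (smt (verit) powr_gt_zero)
  obtain i where j_eq: "j = Suc i"
    using 1(1) by (cases j) auto
  have h: "h \<in> set_pmf (rr_hist I w k q P i)"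
    using 1(2) \<open>j \<le> N\<close> map_pmf_take_rr_hist[of i N I w k q P]
    unfolding j_eq diff_Suc_1 q_def[symmetric] N_def[symmetric] by simp
  have "LP_approx eps I w v k (remaining I h) (real m * (1 - (real j - 1) * eps)) (P j h)"
    using policy \<open>j \<le> N\<close> 1 unfolding N_def by auto
  then have "LP_feasible I w k (remaining I h) (real m * (1 - real i * eps)) (P (Suc i) h)"
    unfolding LP_approx_def j_eq by simp
  then show ?case
    using frac_val_le_cond_expected_round_gain[OF finI v_nonneg m_pos eps_range(1) _ q _
        \<open>j \<le> N\<close>[unfolded j_eq] h]
      sqrt_le_remaining_share[OF eps_range(1) j_le] eps_range(2)
    unfolding j_eq q_def N_def by simp
qed

end
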